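(* Let $X$ be a finite set of proposals with $m=|X|$. Every divisiveness selection function $\Delta$ on $X$ that satisfies both Anonymity and Neutrality also satisfies Uniformity, i.e., $\Delta(R^U)=X$ for every perfectly uniform profile $R^U$.
   Context: Let $X$ be a finite set of proposals, $m=|X|$, and let $X!$ denote the set of all strict linear orders on $X$. A profile is a function $R:N\to X!$ where $N\subset\mathbb{N}$ is a finite nonempty set of agents (the electorate); write $R_i=R(i)$. A divisiveness selection function (DSF) is a function $\Delta$ mapping every profile (for every finite nonempty $N\subset\mathbb{N}$) to a nonempty subset of $X$. Anonymity: $\Delta(R)=\Delta(R\circ\sigma)$ for every profile $R$ and every bijection $\sigma:\mathbb{N}\to\mathbb{N}$ (so $R\circ\sigma$ is the profile obtained by letting agents exchange preferences, possibly with agents outside $N$). Neutrality: $\Delta(\sigma(R))=\sigma(\Delta(R))$ for every profile $R$ and every permutation $\sigma:X\to X$, where $\sigma$ is extended in the natural way to subsets of $X$ and to profiles (renaming proposals in every ranking). A profile is perfectly uniform if each of the $m!$ linear orders on $X$ occurs in it equally often (i.e., is reported by the same number of agents). *)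

theory Defs
  imports "HOL-Combinatorics.Permutations"
begin

text \<open>Strict linear orders on the finite set of proposals X, as relations contained in X \<times> X.
  The pair (x, y) in r means that x is ranked above y.\<close>
definition lin_orders :: "'a set \<Rightarrow> 'a rel set" where
  "lin_orders X = {r. r \<subseteq> X \<times> X \<and> strict_linear_order_on X r}"

text \<open>A profile is a partial map from agents (natural numbers) to strict linear orders on X,
  whose domain (the electorate N) is finite and nonempty.\<close>
type_synonym 'a profile = "nat \<Rightarrow> 'a rel option"

definition is_profile :: "'a set \<Rightarrow> 'a profile \<Rightarrow> bool" where
  "is_profile X R \<longleftrightarrow> finite (dom R) \<and> dom R \<noteq> {} \<and> ran R \<subseteq> lin_orders X"

definition is_DSF :: "'a set \<Rightarrow> ('a profile \<Rightarrow> 'a set) \<Rightarrow> bool" where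
  "is_DSF X \<Delta> \<longleftrightarrow> (\<forall>R. is_profile X R \<longrightarrow> \<Delta> R \<noteq> {} \<and> \<Delta> R \<subseteq> X)"

definition anonymous :: "'a set \<Rightarrow> ('a profile \<Rightarrow> 'a set) \<Rightarrow> bool" where
  "anonymous X \<Delta> \<longleftrightarrow> (\<forall>R \<sigma>. is_profile X R \<and> bij (\<sigma> :: nat \<Rightarrow> nat) \<longrightarrow> \<Delta> (R \<circ> \<sigma>) = \<Delta> R)"

definition rename_order :: "('a \<Rightarrow> 'a) \<Rightarrow> 'a rel \<Rightarrow> 'a rel" where
  "rename_order \<sigma> r = (\<lambda>(x, y). (\<sigma> x, \<sigma> y)) ` r"

definition rename_profile :: "('a \<Rightarrow> 'a) \<Rightarrow> 'a profile \<Rightarrow> 'a profile" where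
  "rename_profile \<sigma> R = map_option (rename_order \<sigma>) \<circ> R"

definition neutral :: "'a set \<Rightarrow> ('a profile \<Rightarrow> 'a set) \<Rightarrow> bool" where
  "neutral X \<Delta> \<longleftrightarrow> (\<forall>R \<sigma>. is_profile X R \<and> \<sigma> permutes X \<longrightarrow> \<Delta> (rename_profile \<sigma> R) = \<sigma> ` \<Delta> R)"

definition perfectly_uniform :: "'a set \<Rightarrow> 'a profile \<Rightarrow> bool" where
  "perfectly_uniform X R \<longleftrightarrow> is_profile X R \<and>
     (\<forall>r \<in> lin_orders X. \<forall>s \<in> lin_orders X. card {i. R i = Some r} = card {i. R i = Some s})"

end

(* Renaming proposals by a permutation sigma of X permutes the rankings of X, so in a
   perfectly uniform profile the agents reporting a ranking can be matched bijectively with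
   the agents reporting its renamed copy: the renamed profile is the original one with the
   agents reindexed. *)
theory Submission
  imports Defs "HOL-Library.Equipollence"
begin

lemma bij_reindex_if_fibers_eqpoll:
  fixes f g :: "'i \<Rightarrow> 'b"
  assumes fibers: "\<And>v. {i. g i = v} \<approx> {i. f i = v}"
  shows "\<exists>\<pi>. bij \<pi> \<and> f \<circ> \<pi> = g"
proof -
  obtain H G where
    H: "\<And>v i. g i = v \<Longrightarrow> f (H v i) = v \<and> G v (H v i) = i" and
    G: "\<And>v k. f k = v \<Longrightarrow> g (G v k) = v \<and> H v (G v k) = k"
    using fibers unfolding eqpoll_def bij_betw_iff_bijections by (simp add: Ball_def) metis
  define \<pi> where "\<pi> i = H (g i) i" for i
  define \<rho> where "\<rho> k = G (f k) k" for k
  have "\<rho> \<circ> \<pi> = id" "\<pi> \<circ> \<rho> = id"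
    using H G by (auto simp: \<pi>_def \<rho>_def)
  then have "bij \<pi>" by (rule o_bij)
  moreover have "f \<circ> \<pi> = g" using H by (auto simp: \<pi>_def)
  ultimately show ?thesis by blast
qed

lemma rename_order_comp: "rename_order \<sigma> (rename_order \<tau> r) = rename_order (\<sigma> \<circ> \<tau>) r"
  by (force simp: rename_order_def)

lemma rename_order_id: "rename_order id r = r"
  by (force simp: rename_order_def)

lemma rename_order_inv_cancel:
  assumes "bij \<sigma>"
  shows "rename_order (inv \<sigma>) (rename_order \<sigma> r) = r"
    and "rename_order \<sigma> (rename_order (inv \<sigma>) r) = r"
proof -
  have "inv \<sigma> \<circ> \<sigma> = id" "\<sigma> \<circ> inv \<sigma> = id"
    using assms by (simp_all add: bij_is_inj bij_is_surj surj_iff[symmetric])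
  then show "rename_order (inv \<sigma>) (rename_order \<sigma> r) = r"
    and "rename_order \<sigma> (rename_order (inv \<sigma>) r) = r"
    by (simp_all add: rename_order_comp rename_order_id)
qed

lemma rename_order_eq_preimage:
  assumes "bij \<sigma>"
  shows "rename_order \<sigma> r = {(p, q). (inv \<sigma> p, inv \<sigma> q) \<in> r}"
proof -
  have \<sigma>_inv: "\<sigma> (inv \<sigma> p) = p" and inv_\<sigma>: "inv \<sigma> (\<sigma> p) = p" for p
    using assms by (simp_all add: bij_is_surj surj_f_inv_f bij_is_inj)
  show ?thesis
    unfolding rename_order_def
  proof (intro equalityI subsetI)
    fix z assume "z \<in> (\<lambda>(x, y). (\<sigma> x, \<sigma> y)) ` r"
    then show "z \<in> {(p, q). (inv \<sigma> p, inv \<sigma> q) \<in> r}" by (auto simp: inv_\<sigma>)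
  next
    fix z assume "z \<in> {(p, q). (inv \<sigma> p, inv \<sigma> q) \<in> r}"
    then obtain p q where "z = (\<sigma> (inv \<sigma> p), \<sigma> (inv \<sigma> q))" "(inv \<sigma> p, inv \<sigma> q) \<in> r"
      by (auto simp: \<sigma>_inv)
    then show "z \<in> (\<lambda>(x, y). (\<sigma> x, \<sigma> y)) ` r" by force
  qed
qed

lemma preimage_in_lin_orders:
  assumes \<tau>: "\<tau> permutes X" and r: "r \<in> lin_orders X"
  shows "{(p, q). (\<tau> p, \<tau> q) \<in> r} \<in> lin_orders X" (is "?r' \<in> _")
proof -
  have in_X: "\<tau> p \<in> X \<longleftrightarrow> p \<in> X" for p
    using \<tau> by (simp add: permutes_in_image)
  have inj: "\<tau> p = \<tau> q \<longleftrightarrow> p = q" for p q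
    using permutes_inj[OF \<tau>] by (simp add: inj_eq)
  from r have r: "r \<subseteq> X \<times> X" "trans r" "irrefl r" "total_on X r"
    unfolding lin_orders_def strict_linear_order_on_def by auto
  have "?r' \<subseteq> X \<times> X" using r(1) in_X by blast
  moreover have "trans ?r'" using r(2) unfolding trans_def by blast
  moreover have "irrefl ?r'" using r(3) unfolding irrefl_def by blast
  moreover have "total_on X ?r'" using r(4) in_X inj unfolding total_on_def by blast
  ultimately show ?thesis unfolding lin_orders_def strict_linear_order_on_def by blast
qed

lemma rename_order_in_lin_orders:
  assumes "\<sigma> permutes X" "r \<in> lin_orders X"
  shows "rename_order \<sigma> r \<in> lin_orders X"
  unfolding rename_order_eq_preimage[OF permutes_bij[OF assms(1)]]
  using preimage_in_lin_orders[OF permutes_inv[OF assms(1)] assms(2)] .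

lemma rename_order_in_lin_orders_iff:
  assumes "\<sigma> permutes X"
  shows "rename_order \<sigma> r \<in> lin_orders X \<longleftrightarrow> r \<in> lin_orders X"
  using rename_order_in_lin_orders[OF permutes_inv[OF assms], of "rename_order \<sigma> r"]
    rename_order_in_lin_orders[OF assms]
  by (auto simp: rename_order_inv_cancel permutes_bij[OF assms])

lemma rename_profile_fiber:
  assumes "bij \<sigma>"
  shows "{i. rename_profile \<sigma> R i = Some r} = {i. R i = Some (rename_order (inv \<sigma>) r)}"
  using rename_order_inv_cancel[OF assms]
  unfolding rename_profile_def by force

lemma rename_profile_None_iff: "rename_profile \<sigma> R i = None \<longleftrightarrow> R i = None"
  by (simp add: rename_profile_def)

lemma is_profile_finite_fiber:
  assumes "is_profile X R"
  shows "finite {i. R i = Some r}"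
proof (rule finite_subset)
  show "{i. R i = Some r} \<subseteq> dom R" by blast
  show "finite (dom R)" using assms unfolding is_profile_def by blast
qed

lemma is_profile_fiber_empty:
  assumes "is_profile X R" "r \<notin> lin_orders X"
  shows "{i. R i = Some r} = {}"
  using assms unfolding is_profile_def by (auto intro: ranI)

lemma perfectly_uniform_card_fiber_eq:
  assumes "perfectly_uniform X R" "r \<in> lin_orders X \<longleftrightarrow> s \<in> lin_orders X"
  shows "card {i. R i = Some r} = card {i. R i = Some s}"
proof (cases "r \<in> lin_orders X")
  case True
  then show ?thesis using assms unfolding perfectly_uniform_def by blast
next
  case False
  have "is_profile X R" using assms(1) unfolding perfectly_uniform_def by blast
  then show ?thesis using False assms(2) by (simp add: is_profile_fiber_empty)
qed

lemma perfectly_uniform_rename_reindex: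
  assumes uniform: "perfectly_uniform X R" and \<sigma>: "\<sigma> permutes X"
  shows "\<exists>\<pi>. bij \<pi> \<and> R \<circ> \<pi> = rename_profile \<sigma> R"
proof (rule bij_reindex_if_fibers_eqpoll)
  have R: "is_profile X R" using uniform unfolding perfectly_uniform_def by blast
  fix v
  show "{i. rename_profile \<sigma> R i = v} \<approx> {i. R i = v}"
  proof (cases v)
    case None
    then show ?thesis by (simp add: rename_profile_None_iff)
  next
    case (Some r)
    have "rename_order (inv \<sigma>) r \<in> lin_orders X \<longleftrightarrow> r \<in> lin_orders X"
      by (rule rename_order_in_lin_orders_iff[OF permutes_inv[OF \<sigma>]])
    then have "card {i. R i = Some (rename_order (inv \<sigma>) r)} = card {i. R i = Some r}"
      by (rule perfectly_uniform_card_fiber_eq[OF uniform])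
    then show ?thesis
      using Some is_profile_finite_fiber[OF R]
      by (simp add: rename_profile_fiber[OF permutes_bij[OF \<sigma>]] eqpoll_iff_card)
  qed
qed

lemma anonymous_neutral_perfectly_uniform_invariant:
  assumes "anonymous X \<Delta>" "neutral X \<Delta>" "perfectly_uniform X R" "\<sigma> permutes X"
  shows "\<sigma> ` \<Delta> R = \<Delta> R"
proof -
  have R: "is_profile X R" using assms(3) unfolding perfectly_uniform_def by blast
  obtain \<pi> where "bij \<pi>" "R \<circ> \<pi> = rename_profile \<sigma> R"
    using perfectly_uniform_rename_reindex[OF assms(3,4)] by blast
  then have "\<Delta> (rename_profile \<sigma> R) = \<Delta> R"
    using assms(1) R unfolding anonymous_def by metis
  moreover have "\<Delta> (rename_profile \<sigma> R) = \<sigma> ` \<Delta> R"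
    using assms(2,4) R unfolding neutral_def by blast
  ultimately show ?thesis by simp
qed

lemma permutation_invariant_subset_eq:
  assumes "A \<subseteq> X" "A \<noteq> {}" "\<And>\<sigma>. \<sigma> permutes X \<Longrightarrow> \<sigma> ` A = A"
  shows "A = X"
proof
  obtain x where x: "x \<in> A" using assms(2) by blast
  show "X \<subseteq> A"
  proof
    fix y assume "y \<in> X"
    then have "transpose x y permutes X" using x assms(1) by (blast intro: permutes_swap_id)
    then have "transpose x y x \<in> A" using x assms(3) by blast
    then show "y \<in> A" by simp
  qed
qed (use assms(1) in blast)

theorem proposition1:
  fixes X :: "'a set" and \<Delta> :: "'a profile \<Rightarrow> 'a set" and RU :: "'a profile"
  assumes "finite X"
    and "is_DSF X \<Delta>"
    and "anonymous X \<Delta>"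
    and "neutral X \<Delta>"
    and "perfectly_uniform X RU"
  shows "\<Delta> RU = X"
proof (rule permutation_invariant_subset_eq)
  show "\<Delta> RU \<subseteq> X" "\<Delta> RU \<noteq> {}"
    using assms(2,5) unfolding is_DSF_def perfectly_uniform_def by auto
  show "\<sigma> ` \<Delta> RU = \<Delta> RU" if "\<sigma> permutes X" for \<sigma>
    using anonymous_neutral_perfectly_uniform_invariant[OF assms(3-5) that] .
qed

end
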